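(* For every integer $n\ge2$, $K(n)\ge n-1$.
   Context: Electricity division instance: supply $S>0$ and demands $D=(D[1],\dots,D[n])$ with $0<D[i]\le S$. A schedule partitions the time interval into finitely many subintervals, each assigned a set of households whose total demand is at most $S$; the egalitarian connection-time is the maximum, over schedules, of the minimum over households of the fraction of time the household is connected. For an integer $k\ge1$, a $k$-times bin packing of $D$ assigns $k$ copies of each household (item of size $D[i]$) to bins so that each bin has total size at most $S$ and no bin contains two copies of the same item; $OPT(D_k)$ is the minimum number of bins. $K(D)$ is the smallest positive integer $k$ such that the egalitarian connection-time of the instance equals $k/OPT(D_k)$, and $K(n)$ is the maximum of $K(D)$ over all instances with $n$ households. *)

theory Defs
  imports Complex_Main
begin

text \<open>Households are indexed by 0..n-1, demands D i, supply S.\<close>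

definition valid_instance :: "nat \<Rightarrow> real \<Rightarrow> (nat \<Rightarrow> real) \<Rightarrow> bool" where
  "valid_instance n S D \<longleftrightarrow> S > 0 \<and> (\<forall>i<n. 0 < D i \<and> D i \<le> S)"

definition feasible_set :: "nat \<Rightarrow> real \<Rightarrow> (nat \<Rightarrow> real) \<Rightarrow> nat set \<Rightarrow> bool" where
  "feasible_set n S D A \<longleftrightarrow> A \<subseteq> {..<n} \<and> (\<Sum>i\<in>A. D i) \<le> S"

text \<open>A schedule: finitely many subintervals of the (normalised) time interval [0,1],
  given as (length, connected set) pairs with positive lengths summing to 1.\<close>
definition is_schedule :: "nat \<Rightarrow> real \<Rightarrow> (nat \<Rightarrow> real) \<Rightarrow> (real \<times> nat set) list \<Rightarrow> bool" where
  "is_schedule n S D sch \<longleftrightarrow>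
     (\<forall>(t, A) \<in> set sch. t > 0 \<and> feasible_set n S D A) \<and> sum_list (map fst sch) = 1"

definition conn_time :: "(real \<times> nat set) list \<Rightarrow> nat \<Rightarrow> real" where
  "conn_time sch i = sum_list (map (\<lambda>(t, A). if i \<in> A then t else 0) sch)"

definition egal_time :: "nat \<Rightarrow> real \<Rightarrow> (nat \<Rightarrow> real) \<Rightarrow> real" where
  "egal_time n S D = Sup {(MIN i\<in>{..<n}. conn_time sch i) | sch. is_schedule n S D sch}"

text \<open>A k-times bin packing with m bins: bin b (b < m) holds a set of items (so no two
  copies of the same item share a bin), each bin fits, and each item lies in exactly k bins.\<close>
definition is_k_packing :: "nat \<Rightarrow> real \<Rightarrow> (nat \<Rightarrow> real) \<Rightarrow> nat \<Rightarrow> nat \<Rightarrow> (nat \<Rightarrow> nat set) \<Rightarrow> bool" where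
  "is_k_packing n S D k m bins \<longleftrightarrow>
     (\<forall>b<m. feasible_set n S D (bins b)) \<and> (\<forall>i<n. card {b. b < m \<and> i \<in> bins b} = k)"

definition OPT_k :: "nat \<Rightarrow> real \<Rightarrow> (nat \<Rightarrow> real) \<Rightarrow> nat \<Rightarrow> nat" where
  "OPT_k n S D k = (LEAST m. \<exists>bins. is_k_packing n S D k m bins)"

definition K_good :: "nat \<Rightarrow> real \<Rightarrow> (nat \<Rightarrow> real) \<Rightarrow> nat \<Rightarrow> bool" where
  "K_good n S D k \<longleftrightarrow> k \<ge> 1 \<and> egal_time n S D = real k / real (OPT_k n S D k)"

definition K_inst :: "nat \<Rightarrow> real \<Rightarrow> (nat \<Rightarrow> real) \<Rightarrow> nat" where
  "K_inst n S D = (LEAST k. K_good n S D k)"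

end

theory Submission
  imports Defs
begin

text \<open>Take n households of unit demand and supply n - 1. Since at most n - 1 households
  can be connected at any time, every schedule connects households for a total time of at
  most n - 1, so some household gets at most (n - 1)/n; switching off each household in
  turn for time 1/n attains this, so the egalitarian connection time is (n - 1)/n. The
  same leave-one-out sets form an (n - 1)-times packing into n bins, which is optimal by
  double counting. Because n - 1 and n are coprime, k / OPT(D_k) = (n - 1)/n forces
  n - 1 to divide k, hence K(D) \<ge> n - 1.\<close>

lemma weighted_conn_time_eq:
  assumes "\<forall>(t, A) \<in> set sch. A \<subseteq> {..<n}"
  shows "(\<Sum>i<n. D i * conn_time sch i) = (\<Sum>(t, A)\<leftarrow>sch. t * sum D A)"
  using assms
proof (induction sch)
  case Nil
  then show ?case by (simp add: conn_time_def)
next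
  case (Cons p sch)
  obtain t A where p: "p = (t, A)" by (cases p)
  with Cons.prems have "A \<subseteq> {..<n}" by auto
  have "(\<Sum>i<n. D i * (if i \<in> A then t else 0)) = (\<Sum>i<n. if i \<in> A then t * D i else 0)"
    by (intro sum.cong) auto
  also have "\<dots> = (\<Sum>i\<in>{..<n} \<inter> A. t * D i)"
    by (rule sum.inter_restrict[symmetric]) simp
  also have "\<dots> = t * sum D A"
    using \<open>A \<subseteq> {..<n}\<close> by (simp add: Int_absorb1 sum_distrib_left)
  finally have "(\<Sum>i<n. D i * (if i \<in> A then t else 0)) = t * sum D A" .
  moreover have "conn_time (p # sch) i = (if i \<in> A then t else 0) + conn_time sch i" for i
    by (simp add: conn_time_def p)
  ultimately show ?case
    using Cons by (simp add: p distrib_left sum.distrib)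
qed

lemma weighted_conn_time_le:
  assumes "is_schedule n S D sch"
  shows "(\<Sum>i<n. D i * conn_time sch i) \<le> S"
proof -
  have sch: "\<forall>(t, A) \<in> set sch. t > 0 \<and> A \<subseteq> {..<n} \<and> sum D A \<le> S"
    and total: "(\<Sum>(t, A)\<leftarrow>sch. t) = 1"
    using assms by (auto simp: is_schedule_def feasible_set_def case_prod_beta')
  have "(\<Sum>i<n. D i * conn_time sch i) = (\<Sum>(t, A)\<leftarrow>sch. t * sum D A)"
    using sch by (intro weighted_conn_time_eq) auto
  also have "\<dots> \<le> (\<Sum>(t, A)\<leftarrow>sch. t * S)"
    using sch by (intro sum_list_mono) (auto intro: mult_left_mono)
  also have "\<dots> = S * (\<Sum>(t, A)\<leftarrow>sch. t)"
    by (induction sch) (auto simp: algebra_simps)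
  finally show ?thesis
    using total by simp
qed

lemma min_conn_time_le:
  assumes "is_schedule n S D sch" "0 < n" "\<forall>i<n. 0 \<le> D i"
  shows "(MIN i\<in>{..<n}. conn_time sch i) * sum D {..<n} \<le> S"
proof -
  have "(MIN i\<in>{..<n}. conn_time sch i) * sum D {..<n}
      = (\<Sum>i<n. D i * (MIN i\<in>{..<n}. conn_time sch i))"
    by (simp add: sum_distrib_right mult.commute)
  also have "\<dots> \<le> (\<Sum>i<n. D i * conn_time sch i)"
    using assms(2,3) by (intro sum_mono mult_left_mono) auto
  also have "\<dots> \<le> S"
    using assms(1) by (rule weighted_conn_time_le)
  finally show ?thesis .
qed

lemma egal_time_eqI:
  assumes "is_schedule n S D sch" "(MIN i\<in>{..<n}. conn_time sch i) = v"
    and "\<And>sch'. is_schedule n S D sch' \<Longrightarrow> (MIN i\<in>{..<n}. conn_time sch' i) \<le> v"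
  shows "egal_time n S D = v"
  unfolding egal_time_def using assms by (intro cSup_eq_maximum) auto

definition leave_one_out :: "nat \<Rightarrow> (real \<times> nat set) list" where
  "leave_one_out n = map (\<lambda>j. (1 / real n, {..<n} - {j})) [0..<n]"

lemma feasible_set_unit_iff:
  "feasible_set n S (\<lambda>_. 1) A \<longleftrightarrow> A \<subseteq> {..<n} \<and> real (card A) \<le> S"
  by (simp add: feasible_set_def)

lemma is_schedule_leave_one_out:
  assumes "0 < n"
  shows "is_schedule n (real n - 1) (\<lambda>_. 1) (leave_one_out n)"
  using assms
  by (auto simp: is_schedule_def leave_one_out_def feasible_set_unit_iff o_def
      sum_list_triv)

lemma conn_time_leave_one_out:
  assumes "i < n"
  shows "conn_time (leave_one_out n) i = (real n - 1) / real n"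
proof -
  have "conn_time (leave_one_out n) i = (\<Sum>j<n. if j \<noteq> i then 1 / real n else 0)"
    unfolding conn_time_def leave_one_out_def using assms
    by (auto simp: o_def atLeast0LessThan[symmetric] sum_list_sum_nth intro!: sum.cong)
  also have "\<dots> = real (card ({..<n} - {i})) / real n"
    by (simp add: sum.If_cases Diff_eq Compl_eq)
  finally show ?thesis
    using assms by simp
qed

lemma egal_time_unit:
  assumes "0 < n"
  shows "egal_time n (real n - 1) (\<lambda>_. 1) = (real n - 1) / real n"
proof (rule egal_time_eqI)
  show "is_schedule n (real n - 1) (\<lambda>_. 1) (leave_one_out n)"
    using assms by (rule is_schedule_leave_one_out)
  have "(\<lambda>i. conn_time (leave_one_out n) i) ` {..<n} = {(real n - 1) / real n}"
    using assms by (auto simp: conn_time_leave_one_out image_iff)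
  then show "(MIN i\<in>{..<n}. conn_time (leave_one_out n) i) = (real n - 1) / real n"
    by simp
next
  fix sch
  assume "is_schedule n (real n - 1) (\<lambda>_. 1) sch"
  from min_conn_time_le[OF this assms]
  show "(MIN i\<in>{..<n}. conn_time sch i) \<le> (real n - 1) / real n"
    using assms by (simp add: field_simps)
qed

lemma k_packing_total_size:
  assumes "is_k_packing n S D k m bins"
  shows "(\<Sum>b<m. card (bins b)) = k * n"
proof -
  have "bins b \<subseteq> {..<n}" if "b < m" for b
    using assms that by (auto simp: is_k_packing_def feasible_set_def)
  then have "(\<Sum>b<m. card (bins b)) = (\<Sum>b<m. card {i\<in>{..<n}. i \<in> bins b})"
    by (intro sum.cong refl arg_cong[where f = card]) auto
  also have "\<dots> = k * card {..<n}"
    using assms by (intro sum_multicount) (auto simp: is_k_packing_def conj_commute)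
  finally show ?thesis
    by simp
qed

lemma unit_k_packing_bins_ge:
  assumes "is_k_packing n (real c) (\<lambda>_. 1) k m bins"
  shows "k * n \<le> m * c"
proof -
  have "card (bins b) \<le> c" if "b < m" for b
    using assms that by (auto simp: is_k_packing_def feasible_set_unit_iff)
  then have "(\<Sum>b<m. card (bins b)) \<le> m * c"
    using sum_mono[of "{..<m}" "\<lambda>b. card (bins b)" "\<lambda>_. c"] by simp
  then show ?thesis
    using k_packing_total_size[OF assms] by simp
qed

lemma is_k_packing_leave_one_out:
  "is_k_packing n (real n - 1) (\<lambda>_. 1) (n - 1) n (\<lambda>b. {..<n} - {b})"
proof -
  have "{b. b < n \<and> i \<in> {..<n} - {b}} = {..<n} - {i}" if "i < n" for i
    using that by auto
  then show ?thesis
    by (auto simp: is_k_packing_def feasible_set_unit_iff)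
qed

lemma OPT_k_unit:
  assumes "2 \<le> n"
  shows "OPT_k n (real n - 1) (\<lambda>_. 1) (n - 1) = n"
  unfolding OPT_k_def
proof (rule Least_equality)
  show "\<exists>bins. is_k_packing n (real n - 1) (\<lambda>_. 1) (n - 1) n bins"
    using is_k_packing_leave_one_out by blast
next
  fix m
  assume "\<exists>bins. is_k_packing n (real n - 1) (\<lambda>_. 1) (n - 1) m bins"
  then obtain bins where "is_k_packing n (real (n - 1)) (\<lambda>_. 1) (n - 1) m bins"
    using assms by auto
  then have "(n - 1) * n \<le> m * (n - 1)"
    by (rule unit_k_packing_bins_ge)
  then show "n \<le> m"
    using assms by simp
qed

lemma coprime_fraction_eq_imp_dvd:
  fixes a b k m :: nat
  assumes "coprime a b" "0 < a" "0 < b" "real k / real m = real a / real b"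
  shows "a dvd k"
proof -
  have "m \<noteq> 0"
  proof
    assume "m = 0"
    with assms(2-4) show False by simp
  qed
  with assms(3,4) have "real (k * b) = real (a * m)"
    by (simp add: field_simps)
  then have "a dvd k * b"
    by (metis dvd_triv_left of_nat_eq_iff)
  with assms(1) show ?thesis
    by (simp add: coprime_dvd_mult_left_iff)
qed

theorem proposition1:
  fixes n :: nat
  assumes "n \<ge> 2"
  shows "\<exists>S D. valid_instance n S D \<and> (\<exists>k. K_good n S D k) \<and> n - 1 \<le> K_inst n S D"
proof -
  let ?S = "real n - 1" and ?D = "\<lambda>_::nat. 1::real"
  have egal: "egal_time n ?S ?D = real (n - 1) / real n"
    using assms egal_time_unit[of n] by simp
  have valid: "valid_instance n ?S ?D"
    using assms by (auto simp: valid_instance_def)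
  have good: "K_good n ?S ?D (n - 1)"
    unfolding K_good_def egal OPT_k_unit[OF assms] using assms by simp
  have K_good_ge: "n - 1 \<le> k" if "K_good n ?S ?D k" for k
  proof -
    have "coprime (n - 1) n"
      using assms by (intro coprime_diff_one_left_nat) simp
    with that assms have "(n - 1) dvd k"
      by (intro coprime_fraction_eq_imp_dvd[of _ n _ "OPT_k n ?S ?D k"])
        (auto simp: K_good_def egal)
    with that show ?thesis
      by (auto simp: K_good_def dest: dvd_imp_le)
  qed
  have "n - 1 \<le> K_inst n ?S ?D"
    unfolding K_inst_def using good by (rule LeastI2) (rule K_good_ge)
  with valid good show ?thesis
    by blast
qed

end
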